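(* In the setting of the context, let $1\le i\le 2n$ and let $C$ be any point of the segment $N_{i-\frac12}N_{i+\frac12}$. Then $C$ lies in the region $\overline M$ bounded by $M$.
   Context: $[x,y]$ denotes the determinant of the matrix with columns $x,y\in\mathbb{R}^2$. Fix $n\ge2$; indices (integer and half-integer) are read modulo $2n$. $U$ is a convex $2n$-gon with distinct vertices $U_1,\dots,U_{2n}$ in counterclockwise order with $U_{i+n}=-U_i$, and $V_{i+\frac12}=(U_{i+1}-U_i)/[U_i,U_{i+1}]$. Let $c>0$ and let $P$ be a convex polygon with nonempty interior and vertex list $P_1,\dots,P_{2n}$ (listed counterclockwise, consecutive entries may coincide) with $P_{i+1}-P_i$ a nonnegative multiple of $V_{i+\frac12}$ and $P_i-P_{i+n}=2cU_i$ for all $i$. The central equidistant $M$ is the closed polygonal curve with vertices $M_i=\frac12(P_i+P_{i+n})$; define $\alpha_{i+\frac12}$ by $M_{i+1}-M_i=\alpha_{i+\frac12}(U_{i+1}-U_i)$, $\beta_i=\frac12\sum_{j=i}^{i+n-1}\alpha_{j+\frac12}[U_j,U_{j+1}]$, and $N_{i+\frac12}=M_i+\beta_iV_{i+\frac12}$. The exterior of $M$ is the set of points of the plane that can be joined to a point of (the boundary curve of) $P$ by a continuous path not meeting $M$, and $\overline M$ is the complement of the exterior of $M$. *)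

theory Defs
  imports "HOL-Analysis.Analysis"
begin

text \<open>Points of the plane are vectors in real^2. Indices (integer and half-integer)
  are integers read modulo 2n; the half-integer index i + 1/2 is encoded by the integer i.\<close>

definition det2 :: "real^2 \<Rightarrow> real^2 \<Rightarrow> real" where
  "det2 x y = x$1 * y$2 - x$2 * y$1"

text \<open>Convexity + ccw order: every other vertex lies
  strictly to the left of each directed edge U_i U_{i+1}.\<close>
definition sym_convex_polygon :: "nat \<Rightarrow> (int \<Rightarrow> real^2) \<Rightarrow> bool" where
  "sym_convex_polygon n U \<longleftrightarrow>
     (\<forall>i. U (i + 2 * int n) = U i) \<and>
     (\<forall>i. U (i + int n) = - U i) \<and>
     (\<forall>i j. U i = U j \<longrightarrow> i mod (2 * int n) = j mod (2 * int n)) \<and>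
     (\<forall>i j. j mod (2 * int n) \<noteq> i mod (2 * int n) \<and> j mod (2 * int n) \<noteq> (i + 1) mod (2 * int n)
        \<longrightarrow> det2 (U (i + 1) - U i) (U j - U i) > 0)"

definition Vh :: "(int \<Rightarrow> real^2) \<Rightarrow> int \<Rightarrow> real^2" where
  "Vh U i = (1 / det2 (U i) (U (i + 1))) *\<^sub>R (U (i + 1) - U i)"

definition Mv :: "nat \<Rightarrow> (int \<Rightarrow> real^2) \<Rightarrow> int \<Rightarrow> real^2" where
  "Mv n P i = (1/2) *\<^sub>R (P i + P (i + int n))"

definition betaf :: "nat \<Rightarrow> (int \<Rightarrow> real^2) \<Rightarrow> (int \<Rightarrow> real) \<Rightarrow> int \<Rightarrow> real" where
  "betaf n U alpha i = (1/2) * (\<Sum>j\<in>{i .. i + int n - 1}. alpha j * det2 (U j) (U (j + 1)))"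

definition Nh :: "nat \<Rightarrow> (int \<Rightarrow> real^2) \<Rightarrow> (int \<Rightarrow> real^2) \<Rightarrow> (int \<Rightarrow> real) \<Rightarrow> int \<Rightarrow> real^2" where
  "Nh n U P alpha i = Mv n P i + betaf n U alpha i *\<^sub>R Vh U i"

definition Mcurve :: "nat \<Rightarrow> (int \<Rightarrow> real^2) \<Rightarrow> (real^2) set" where
  "Mcurve n P = (\<Union>i\<in>{1 .. 2 * int n}. closed_segment (Mv n P i) (Mv n P (i + 1)))"

definition Ppoly :: "nat \<Rightarrow> (int \<Rightarrow> real^2) \<Rightarrow> (real^2) set" where
  "Ppoly n P = convex hull (P ` {1 .. 2 * int n})"

definition exteriorM :: "nat \<Rightarrow> (int \<Rightarrow> real^2) \<Rightarrow> (real^2) set" where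
  "exteriorM n P = {x. \<exists>g. path g \<and> pathstart g = x \<and> pathfinish g \<in> frontier (Ppoly n P)
                        \<and> path_image g \<inter> Mcurve n P = {}}"

definition Mbar :: "nat \<Rightarrow> (int \<Rightarrow> real^2) \<Rightarrow> (real^2) set" where
  "Mbar n P = - exteriorM n P"

end

theory Submission
  imports Defs
begin

text \<open>Let \<open>side j X = det2 (U (j + 1) - U j) (X - M j)\<close>; since the edges of \<open>M\<close> are parallel to
  those of \<open>U\<close>, it vanishes exactly on the line through the \<open>j\<close>-th edge of \<open>M\<close>. Call \<open>X\<close> good if
  \<open>side (k + 1) X, \<dots>, side (k + n - 1) X\<close> are all positive for some \<open>k\<close>. Off \<open>M\<close>, a zero of
  \<open>side j X\<close> forces \<open>side (j - 1) X\<close> and \<open>side (j + 1) X\<close> to have opposite signs, so there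
  goodness agrees with the closed condition with non-strict inequalities; hence it is constant
  along paths avoiding \<open>M\<close>. Because the edge directions of the symmetric convex polygon \<open>U\<close> turn
  monotonically, points far out along an outer normal of \<open>P\<close> are good, and the normal ray from a
  frontier point of \<open>P\<close> does not meet \<open>M \<subseteq> P\<close>; so frontier points off \<open>M\<close> are good.
  A point \<open>C = M i + \<beta>\<^sub>i ((1 - t) V (i - 1) + t V i)\<close> of the segment is not good: the signs of
  \<open>side (i - 1) C\<close>, \<open>side i C\<close> and of \<open>side i C + \<dots> + side (i + n - 2) C\<close> (computed from the
  definition of \<open>\<beta>\<^sub>i\<close> by summation by parts) cannot occur in a positive run of an antiperiodic
  sequence. Hence no path from \<open>C\<close> to the boundary of \<open>P\<close> avoids \<open>M\<close>.\<close>

lemma det2_add_left: "det2 (a + b) c = det2 a c + det2 b c"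
  and det2_add_right: "det2 c (a + b) = det2 c a + det2 c b"
  and det2_diff_left: "det2 (a - b) c = det2 a c - det2 b c"
  and det2_diff_right: "det2 c (a - b) = det2 c a - det2 c b"
  and det2_minus_left: "det2 (- a) c = - det2 a c"
  and det2_minus_right: "det2 c (- a) = - det2 c a"
  and det2_scaleR_left: "det2 (r *\<^sub>R a) c = r * det2 a c"
  and det2_scaleR_right: "det2 c (r *\<^sub>R a) = r * det2 c a"
  and det2_self: "det2 a a = 0"
  and det2_zero_left: "det2 0 a = 0"
  and det2_zero_right: "det2 a 0 = 0"
  by (simp_all add: det2_def algebra_simps)

lemmas det2_simps = det2_add_left det2_add_right det2_diff_left det2_diff_right det2_minus_left
  det2_minus_right det2_scaleR_left det2_scaleR_right det2_self det2_zero_left det2_zero_right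

lemma det2_commute: "det2 a b = - det2 b a"
  by (simp add: det2_def)

lemma det2_cramer: "det2 a b * det2 w v = det2 v b * det2 w a + det2 a v * det2 w b"
  by (simp add: det2_def algebra_simps)

lemma det2_eq_0_imp_parallel:
  assumes "det2 u q = 0" "u \<noteq> 0"
  obtains r where "q = r *\<^sub>R u"
proof (cases "u$1 = 0")
  case True
  then have "u$2 \<noteq> 0" using assms(2) by (auto simp: vec_eq_iff forall_2)
  with True assms(1) show ?thesis
    by (intro that[of "q$2 / u$2"]) (auto simp: vec_eq_iff forall_2 det2_def field_simps)
next
  case False
  with assms(1) show ?thesis
    by (intro that[of "q$1 / u$1"]) (auto simp: vec_eq_iff forall_2 det2_def field_simps)
qed

lemma det2_eq_0_both_imp_zero:
  assumes "det2 a y = 0" "det2 b y = 0" "det2 a b \<noteq> 0"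
  shows "y = 0"
proof -
  have "a \<noteq> 0" using assms(3) by (auto simp: det2_simps)
  then obtain r where "y = r *\<^sub>R a" by (rule det2_eq_0_imp_parallel[OF assms(1)])
  with assms(2,3) show ?thesis by (simp add: det2_simps det2_commute[of b a])
qed

lemma continuous_on_det2_right: "continuous_on S (\<lambda>X. det2 a (X - b))"
  unfolding det2_def
  by (intro continuous_intros linear_continuous_on bounded_linear_vec_nth)

lemma det2_summation_by_parts:
  fixes U M :: "int \<Rightarrow> real^2"
  shows "(\<Sum>l<Suc m. det2 (U (s + int l)) (M (s + int l + 1) - M (s + int l)))
     = det2 (U (s + int m)) (M (s + int m + 1) - X) - det2 (U s) (M s - X)
       - (\<Sum>l<m. det2 (U (s + int l + 1) - U (s + int l)) (M (s + int l + 1) - X))"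
proof (induction m)
  case 0
  show ?case by (simp add: det2_def algebra_simps)
next
  case (Suc m)
  have "s + int (Suc m) = s + int m + 1" by simp
  with Suc.IH show ?case by (simp add: det2_def algebra_simps)
qed

lemma mod_neq_if_abs_diff_less:
  fixes x y N :: int
  assumes "0 < \<bar>x - y\<bar>" "\<bar>x - y\<bar> < N"
  shows "x mod N \<noteq> y mod N"
proof
  assume "x mod N = y mod N"
  then have "N dvd \<bar>x - y\<bar>" by (simp add: mod_eq_dvd_iff)
  with assms show False using zdvd_imp_le by fastforce
qed

lemma periodic_add_mult:
  fixes f :: "int \<Rightarrow> 'a"
  assumes "\<And>j. f (j + N) = f j"
  shows "f (j + z * N) = f j"
proof (induction z rule: int_induct[where k = 0])
  case (step1 z)
  then show ?case using assms[of "j + z * N"] by (simp add: algebra_simps)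
next
  case (step2 z)
  then show ?case using assms[of "j + (z - 1) * N"] by (simp add: algebra_simps)
qed simp

lemma periodic_in_image:
  fixes f :: "int \<Rightarrow> 'a"
  assumes "\<And>j. f (j + N) = f j" "0 < N"
  shows "f j \<in> f ` {1..N}"
proof
  have "j = ((j - 1) mod N + 1) + (j - 1) div N * N" by simp
  then show "f j = f ((j - 1) mod N + 1)" using periodic_add_mult[of f, OF assms(1)] by metis
  have "0 \<le> (j - 1) mod N" "(j - 1) mod N < N" using assms(2) by simp_all
  then show "(j - 1) mod N + 1 \<in> {1..N}" by simp
qed

lemma sum_int_interval_eq_sum_lessThan: "(\<Sum>m\<in>{j..j + int n - 1}. f m) = (\<Sum>l<n. f (j + int l))"
proof -
  have "{j..j + int n - 1} = (\<lambda>l. j + int l) ` {..<n}"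
    by (auto simp: image_iff intro!: bexI[of _ "nat (_ - j)"])
  moreover have "inj_on (\<lambda>l. j + int l) {..<n}" by (auto simp: inj_on_def)
  ultimately show ?thesis by (simp add: sum.reindex)
qed

lemma int_sign_change:
  fixes f :: "int \<Rightarrow> real"
  assumes "f a \<le> 0" "0 < f (a + int N)"
  obtains j where "f j \<le> 0" "0 < f (j + 1)"
  using assms
proof (induction N arbitrary: a)
  case (Suc N)
  show ?case
  proof (cases "0 < f (a + 1)")
    case True then show ?thesis using Suc.prems by blast
  next
    case False
    then show ?thesis using Suc.IH[of "a + 1"] Suc.prems by (simp add: add_ac)
  qed
qed simp

lemma ex_scale_all_pos:
  fixes a b :: "'i \<Rightarrow> real"
  assumes "finite L" "\<And>l. l \<in> L \<Longrightarrow> 0 < b l"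
  obtains T where "0 \<le> T" "\<And>l. l \<in> L \<Longrightarrow> 0 < a l + T * b l"
proof
  define T where "T = 1 + (\<Sum>l\<in>L. \<bar>a l\<bar> / b l)"
  have terms: "0 \<le> \<bar>a l\<bar> / b l" if "l \<in> L" for l using assms(2)[OF that] by simp
  then show "0 \<le> T" unfolding T_def by (simp add: sum_nonneg)
  fix l assume l: "l \<in> L"
  have "\<bar>a l\<bar> / b l \<le> (\<Sum>l\<in>L. \<bar>a l\<bar> / b l)" using assms(1) l terms by (intro member_le_sum) auto
  then have "(1 + \<bar>a l\<bar> / b l) * b l \<le> T * b l"
    unfolding T_def using assms(2)[OF l] by (intro mult_right_mono) auto
  moreover have "(1 + \<bar>a l\<bar> / b l) * b l = b l + \<bar>a l\<bar>" using assms(2)[OF l] by (simp add: field_simps)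
  ultimately have "b l + \<bar>a l\<bar> \<le> T * b l" by simp
  then show "0 < a l + T * b l" using assms(2)[OF l] abs_ge_minus_self[of "a l"] by linarith
qed

lemma add_scaleR_in_closed_segment:
  fixes a w :: "'a::real_vector"
  assumes "u * (u - c) \<le> 0"
  shows "a + u *\<^sub>R w \<in> closed_segment a (a + c *\<^sub>R w)"
proof (cases "c = 0")
  case True
  then have "u = 0" using assms by (auto simp: mult_le_0_iff)
  with True show ?thesis by simp
next
  case False
  define t where "t = u / c"
  have u: "u = t * c" using False by (simp add: t_def)
  have "t * (t - 1) * c\<^sup>2 \<le> 0" using assms by (simp add: u power2_eq_square algebra_simps)
  moreover have "0 < c\<^sup>2" using False by simp
  ultimately have "t * (t - 1) \<le> 0" by (simp add: mult_le_0_iff)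
  then have "0 \<le> t" "t \<le> 1" by (auto simp: mult_le_0_iff)
  moreover have "a + u *\<^sub>R w = (1 - t) *\<^sub>R a + t *\<^sub>R (a + c *\<^sub>R w)" by (simp add: u algebra_simps)
  ultimately show ?thesis unfolding in_segment(1) by blast
qed

lemma closed_segment_on_ray:
  fixes x v :: "'a::real_vector"
  assumes "y \<in> closed_segment x (x + T *\<^sub>R v)" "0 \<le> T"
  obtains t where "0 \<le> t" "y = x + t *\<^sub>R v"
proof -
  obtain u where "0 \<le> u" "u \<le> 1" "y = (1 - u) *\<^sub>R x + u *\<^sub>R (x + T *\<^sub>R v)"
    using assms(1) unfolding in_segment(1) by blast
  then show ?thesis using assms(2) by (intro that[of "u * T"]) (simp_all add: algebra_simps)
qed

section \<open>Antiperiodic sign sequences\<close>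

definition antiperiodic :: "nat \<Rightarrow> (int \<Rightarrow> real) \<Rightarrow> bool" where
  "antiperiodic n q \<longleftrightarrow> (\<forall>j. q (j + int n) = - q j)"

definition positive_run :: "nat \<Rightarrow> (int \<Rightarrow> real) \<Rightarrow> int \<Rightarrow> bool" where
  "positive_run n q k \<longleftrightarrow> (\<forall>l\<in>{1..int n - 1}. 0 < q (k + l))"

definition crosses_at_zeros :: "(int \<Rightarrow> real) \<Rightarrow> bool" where
  "crosses_at_zeros q \<longleftrightarrow> (\<forall>j. q j = 0 \<longrightarrow> q (j - 1) * q (j + 1) < 0)"

lemma antiperiodicD: "antiperiodic n q \<Longrightarrow> q (j + int n) = - q j"
  by (simp add: antiperiodic_def)

lemma antiperiodic_periodic: "antiperiodic n q \<Longrightarrow> q (j + 2 * int n) = q j"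
  using antiperiodicD[of n q j] antiperiodicD[of n q "j + int n"] by (simp add: add.assoc)

lemma antiperiodic_uminus: "antiperiodic n q \<Longrightarrow> antiperiodic n (\<lambda>j. - q j)"
  by (simp add: antiperiodic_def)

lemma positive_run_uminus:
  "antiperiodic n q \<Longrightarrow> positive_run n q k \<Longrightarrow> positive_run n (\<lambda>j. - q j) (k + int n)"
  unfolding positive_run_def by (metis add.commute add.left_commute antiperiodicD minus_minus)

lemma positive_run_periodic:
  assumes "antiperiodic n q" "positive_run n q k"
  shows "positive_run n q (k + z * (2 * int n))"
proof -
  have "q (k + z * (2 * int n) + l) = q (k + l)" for l
    using periodic_add_mult[of q, OF antiperiodic_periodic[OF assms(1)], of "k + l" z]
    by (simp add: add_ac)
  with assms(2) show ?thesis by (simp add: positive_run_def)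
qed

lemma crosses_at_zeros_pos:
  assumes "crosses_at_zeros q" "\<forall>j\<in>{a..b}. 0 \<le> q j" "a < j" "j < b"
  shows "0 < q j"
proof (rule ccontr)
  assume "\<not> 0 < q j"
  moreover have "0 \<le> q j" using assms(2-4) by auto
  ultimately have "q j = 0" by simp
  with assms(1) have "q (j - 1) * q (j + 1) < 0" by (simp add: crosses_at_zeros_def)
  moreover have "0 \<le> q (j - 1)" "0 \<le> q (j + 1)" using assms(2-4) by auto
  ultimately show False by (simp add: mult_less_0_iff)
qed

lemma nonneg_run_imp_positive_run:
  assumes n: "2 \<le> n" and anti: "antiperiodic n q" and cross: "crosses_at_zeros q"
    and nonneg: "\<forall>l\<in>{1..int n - 1}. 0 \<le> q (k + l)"
  obtains k' where "positive_run n q k'"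
proof -
  have window: "0 \<le> q j" if "k + 1 \<le> j" "j \<le> k + int n - 1" for j
    using bspec[OF nonneg, of "j - k"] that by simp
  consider "0 < q k" | "q k < 0" | "q k = 0" by linarith
  then show ?thesis
  proof cases
    case 1
    have "\<forall>j\<in>{k..k + int n - 1}. 0 \<le> q j"
    proof
      fix j assume "j \<in> {k..k + int n - 1}"
      with 1 window[of j] show "0 \<le> q j" by (cases "j = k") auto
    qed
    then have "0 < q j" if "k \<le> j" "j \<le> k + int n - 2" for j
      using crosses_at_zeros_pos[OF cross, of k "k + int n - 1" j] 1 that by (cases "j = k") auto
    then show ?thesis by (intro that[of "k - 1"]) (auto simp: positive_run_def)
  next
    case 2
    then have pos: "0 < q (k + int n)" using antiperiodicD[OF anti] by simp
    have "\<forall>j\<in>{k + 1..k + int n}. 0 \<le> q j"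
    proof
      fix j assume "j \<in> {k + 1..k + int n}"
      with pos window[of j] show "0 \<le> q j" by (cases "j = k + int n") auto
    qed
    then have "0 < q j" if "k + 2 \<le> j" "j \<le> k + int n" for j
      using crosses_at_zeros_pos[OF cross, of "k + 1" "k + int n" j] pos that
      by (cases "j = k + int n") auto
    then show ?thesis by (intro that[of "k + 1"]) (auto simp: positive_run_def)
  next
    case 3
    then have zero: "q (k + int n) = 0" using antiperiodicD[OF anti] by simp
    have "\<forall>j\<in>{k..k + int n}. 0 \<le> q j"
    proof
      fix j assume "j \<in> {k..k + int n}"
      with 3 zero window[of j] show "0 \<le> q j" by (cases "j = k \<or> j = k + int n") auto
    qed
    then show ?thesis using crosses_at_zeros_pos[OF cross, of k "k + int n"]
      by (intro that[of k]) (auto simp: positive_run_def)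
  qed
qed

text \<open>With a positive run at \<open>k\<close>, an antiperiodic \<open>q\<close> is positive at \<open>k + 1, \<dots>, k + n - 1\<close>
  and negative at \<open>k + n + 1, \<dots>, k + 2n - 1\<close> (mod \<open>2n\<close>). So a descent \<open>q (i - 1) \<ge> 0 \<ge> q i\<close>
  only occurs at \<open>i \<equiv> k + n\<close> or \<open>i \<equiv> k + n + 1\<close>, and there the \<open>n - 1\<close> terms from \<open>i\<close> on
  sum to at most \<open>q i \<le> 0\<close>, respectively to a negative number.\<close>

lemma positive_run_no_descent:
  assumes n: "2 \<le> n" and anti: "antiperiodic n q" and run: "positive_run n q k"
    and descent: "0 \<le> q (i - 1)" "q i \<le> 0"
    and sum_nonneg: "0 \<le> (\<Sum>l<n - 1. q (i + int l))"
    and sum_pos: "0 < q (i - 1) \<Longrightarrow> 0 < (\<Sum>l<n - 1. q (i + int l))"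
  shows False
proof -
  define r where "r = (i - k) mod (2 * int n)"
  define k' where "k' = i - r"
  have r: "0 \<le> r" "r < 2 * int n" using n by (simp_all add: r_def)
  have i: "i = k' + r" by (simp add: k'_def)
  have k': "k' = k + (i - k) div (2 * int n) * (2 * int n)"
    using div_mult_mod_eq[of "i - k" "2 * int n"] by (simp add: k'_def r_def)
  have pos: "0 < q (k' + l)" if "1 \<le> l" "l \<le> int n - 1" for l
    using positive_run_periodic[OF anti run] that by (simp add: k' positive_run_def)
  have neg: "q (k' + int n + l) < 0" if "1 \<le> l" "l \<le> int n - 1" for l
    using pos[OF that] antiperiodicD[OF anti, of "k' + l"] by (simp add: add_ac)
  have split: "(\<Sum>l<n - 1. q (i + int l)) = q i + (\<Sum>l<n - 2. q (i + 1 + int l))"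
  proof -
    have "n - 1 = Suc (n - 2)" using n by simp
    then show ?thesis by (simp only: sum.lessThan_Suc_shift) (simp add: add_ac)
  qed
  consider "r = 0" | "1 \<le> r" "r \<le> int n - 1" | "r = int n" | "r = int n + 1"
    | "int n + 2 \<le> r" "r \<le> 2 * int n - 1"
    using r by linarith
  then show False
  proof cases
    case 1
    have "q (i - 1) = q (k' + int n + (int n - 1))"
      using antiperiodic_periodic[OF anti, of "i - 1"] 1 i by (simp add: algebra_simps)
    then show False using neg[of "int n - 1"] n descent(1) by simp
  next
    case 2
    then show False using pos[of r] i descent(2) by simp
  next
    case 3
    have "0 < q (i - 1)" using pos[of "int n - 1"] 3 i n by (simp add: algebra_simps)
    moreover have "(\<Sum>l<n - 2. q (i + 1 + int l)) \<le> 0"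
    proof (rule sum_nonpos)
      fix l assume "l \<in> {..<n - 2}"
      then have "q (k' + int n + (1 + int l)) < 0" by (intro neg) auto
      then show "q (i + 1 + int l) \<le> 0" using 3 i by (simp add: add_ac)
    qed
    ultimately show False using sum_pos split descent(2) by linarith
  next
    case 4
    have "(\<Sum>l<n - 1. q (i + int l)) < (\<Sum>l<n - 1. 0)"
    proof (rule sum_strict_mono)
      show "{..<n - 1} \<noteq> {}" using n by (simp add: lessThan_empty_iff)
      fix l assume "l \<in> {..<n - 1}"
      then have "q (k' + int n + (1 + int l)) < 0" by (intro neg) auto
      then show "q (i + int l) < 0" using 4 i by (simp add: add_ac)
    qed simp
    then show False using sum_nonneg by simp
  next
    case 5
    then show False using neg[of "r - int n - 1"] i descent(1) by (simp add: algebra_simps)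
  qed
qed

section \<open>Centrally symmetric convex polygons\<close>

definition ccw_convex_position :: "nat \<Rightarrow> (int \<Rightarrow> real^2) \<Rightarrow> bool" where
  "ccw_convex_position n W \<longleftrightarrow>
     (\<forall>i j. j mod (2 * int n) \<noteq> i mod (2 * int n) \<and> j mod (2 * int n) \<noteq> (i + 1) mod (2 * int n)
        \<longrightarrow> det2 (W (i + 1) - W i) (W j - W i) > 0)"

lemma ccw_convex_positionD:
  assumes "ccw_convex_position n W" "0 < \<bar>j - i\<bar>" "\<bar>j - i\<bar> < 2 * int n"
    "0 < \<bar>j - (i + 1)\<bar>" "\<bar>j - (i + 1)\<bar> < 2 * int n"
  shows "det2 (W (i + 1) - W i) (W j - W i) > 0"
proof -
  have "j mod (2 * int n) \<noteq> i mod (2 * int n)" "j mod (2 * int n) \<noteq> (i + 1) mod (2 * int n)"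
    using assms(2-5) by (simp_all add: mod_neq_if_abs_diff_less)
  with assms(1) show ?thesis unfolding ccw_convex_position_def by blast
qed

lemma sym_convex_polygon_ccw: "sym_convex_polygon n U \<Longrightarrow> ccw_convex_position n U"
  unfolding sym_convex_polygon_def ccw_convex_position_def by blast

lemma det2_consecutive_vertices_pos:
  assumes "2 \<le> n" "\<And>i. W (i + int n) = - W i" "ccw_convex_position n W"
  shows "det2 (W k) (W (k + 1)) > 0"
proof -
  have "det2 (W (k + 1) - W k) (W (k + int n) - W k) > 0"
    using assms(1) by (intro ccw_convex_positionD[OF assms(3)]) auto
  then have "det2 (W (k + 1) - W k) (- 2 *\<^sub>R W k) > 0"
    using assms(2)[of k] by (simp add: algebra_simps scaleR_2)
  then show ?thesis by (simp add: det2_simps det2_commute[of "W (k + 1)"])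
qed

text \<open>The segment from \<open>a\<close> to \<open>b\<close> leaves \<open>-u\<close> on its left and stays to the left of the line
  through \<open>-u\<close> in direction \<open>u - w\<close>; it therefore meets the line \<open>\<real> u\<close> only at multiples
  \<open>s u\<close> with \<open>s > -1\<close>, and at such a point \<open>-u\<close> being on its left forces \<open>det2 u b > det2 u a\<close>.\<close>

lemma det2_pos_across_chord:
  fixes u w a b :: "real^2"
  assumes uw: "det2 u w > 0" and ua: "det2 u a > 0"
    and a_left: "det2 (u - w) (a + u) > 0" and b_left: "det2 (u - w) (b + u) > 0"
    and u_left: "det2 (b - a) (- u - a) > 0"
  shows "det2 u b > 0"
proof (rule ccontr)
  assume "\<not> det2 u b > 0"
  then have ub: "det2 u b \<le> 0" by simp
  define D where "D = det2 u a - det2 u b"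
  have D: "D > 0" using ua ub by (simp add: D_def)
  define Q where "Q = (- det2 u b) *\<^sub>R a + det2 u a *\<^sub>R b"
  have "det2 u Q = 0" by (simp add: Q_def det2_simps)
  moreover have "u \<noteq> 0" using uw by (auto simp: det2_simps)
  ultimately obtain s where s: "Q = s *\<^sub>R u" by (rule det2_eq_0_imp_parallel)
  have "Q + D *\<^sub>R u = (- det2 u b) *\<^sub>R (a + u) + det2 u a *\<^sub>R (b + u)"
    by (simp add: Q_def D_def algebra_simps)
  then have "det2 (u - w) (Q + D *\<^sub>R u)
      = (- det2 u b) * det2 (u - w) (a + u) + det2 u a * det2 (u - w) (b + u)"
    by (simp add: det2_simps)
  also have "\<dots> > 0" using a_left b_left ua ub by (smt (verit) mult_nonneg_nonneg mult_pos_pos)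
  finally have "(s + D) * det2 u w > 0"
    by (simp add: s det2_simps det2_commute[of w u] algebra_simps)
  then have sD: "s + D > 0" using uw by (simp add: zero_less_mult_iff)
  have "Q - D *\<^sub>R a = det2 u a *\<^sub>R (b - a)" by (simp add: Q_def D_def algebra_simps)
  then have "det2 (b - a) (Q - D *\<^sub>R a) = 0" by (simp add: det2_simps)
  then have "det2 (b - a) (- D *\<^sub>R u - Q) = D * det2 (b - a) (- u - a)"
    by (simp add: det2_simps algebra_simps)
  also have "\<dots> > 0" using D u_left by simp
  finally have "(s + D) * det2 (b - a) u < 0" by (simp add: s det2_simps algebra_simps)
  then have "det2 (b - a) u < 0" using sD by (simp add: mult_less_0_iff)
  then show False using ua ub by (simp add: det2_simps det2_commute[of a u] det2_commute[of b u])
qed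

lemma det2_vertices_pos:
  assumes n: "2 \<le> n" and sym: "\<And>i. W (i + int n) = - W i" and cv: "ccw_convex_position n W"
  shows "1 \<le> l \<Longrightarrow> l \<le> n - 1 \<Longrightarrow> det2 (W k) (W (k + int l)) > 0"
proof (induction l rule: nat_induct_at_least)
  case base
  then show ?case using det2_consecutive_vertices_pos[OF n sym cv] by simp
next
  case (Suc l)
  have l: "1 \<le> l" "l + 1 \<le> n - 1" using Suc by auto
  then have l': "1 \<le> int l" "int l + 2 \<le> int n" by auto
  define u w a b where "u = W k" and "w = W (k + 1)" and "a = W (k + int l)"
    and "b = W (k + int l + 1)"
  have W_n: "W (k + int n) = - u" "W (k + int n + 1) = - w"
    using sym[of k] sym[of "k + 1"] by (simp_all add: u_def w_def add_ac)
  have "det2 (W (k + int n + 1) - W (k + int n)) (W (k + int l) - W (k + int n)) > 0"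
    using l' by (intro ccw_convex_positionD[OF cv]) (simp_all add: abs_if)
  then have a_left: "det2 (u - w) (a + u) > 0" unfolding W_n a_def by (simp add: algebra_simps)
  have "det2 (W (k + int n + 1) - W (k + int n)) (W (k + int l + 1) - W (k + int n)) > 0"
    using l' by (intro ccw_convex_positionD[OF cv]) (simp_all add: abs_if)
  then have b_left: "det2 (u - w) (b + u) > 0" unfolding W_n b_def by (simp add: algebra_simps)
  have "det2 (W (k + int l + 1) - W (k + int l)) (W (k + int n) - W (k + int l)) > 0"
    using l' by (intro ccw_convex_positionD[OF cv]) (simp_all add: abs_if)
  then have u_left: "det2 (b - a) (- u - a) > 0" unfolding W_n a_def b_def by (simp add: algebra_simps)
  have "det2 u w > 0" unfolding u_def w_def by (rule det2_consecutive_vertices_pos[OF n sym cv])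
  moreover have "det2 u a > 0" using Suc.IH l unfolding u_def a_def by simp
  ultimately have "det2 u b > 0" using a_left b_left u_left by (rule det2_pos_across_chord)
  then show ?case unfolding u_def b_def by (simp add: add_ac)
qed

section \<open>The central equidistant\<close>

locale central_equidistant =
  fixes n :: nat and U P :: "int \<Rightarrow> real^2" and alpha :: "int \<Rightarrow> real"
  assumes n2: "2 \<le> n"
    and U: "sym_convex_polygon n U"
    and P_periodic: "\<And>k. P (k + 2 * int n) = P k"
    and P_interior: "interior (Ppoly n P) \<noteq> {}"
    and M_edge: "\<And>k. Mv n P (k + 1) - Mv n P k = alpha k *\<^sub>R (U (k + 1) - U k)"
begin

abbreviation M :: "int \<Rightarrow> real^2" where "M \<equiv> Mv n P"
abbreviation V :: "int \<Rightarrow> real^2" where "V \<equiv> Vh U"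
abbreviation beta :: "int \<Rightarrow> real" where "beta \<equiv> betaf n U alpha"

definition e :: "int \<Rightarrow> real^2" where "e j = U (j + 1) - U j"
definition d :: "int \<Rightarrow> real" where "d j = det2 (U j) (U (j + 1))"

lemma U_add_n: "U (j + int n) = - U j"
  using U by (simp add: sym_convex_polygon_def)

lemma U_convex: "ccw_convex_position n U"
  using U by (rule sym_convex_polygon_ccw)

lemma d_pos: "0 < d j"
  unfolding d_def using n2 U_add_n U_convex by (rule det2_consecutive_vertices_pos)

lemma e_add_n: "e (j + int n) = - e j"
  using U_add_n[of j] U_add_n[of "j + 1"] by (simp add: e_def add_ac)

lemma d_add_n: "d (j + int n) = d j"
  using U_add_n[of j] U_add_n[of "j + 1"] by (simp add: d_def add_ac det2_simps)

lemma e_neq_0: "e j \<noteq> 0"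
  using d_pos[of j] by (auto simp: e_def d_def det2_def)

lemma det2_consecutive_edges_pos: "0 < det2 (e (j - 1)) (e j)"
proof -
  have "0 < det2 (U (j - 1 + 1) - U (j - 1)) (U (j + 1) - U (j - 1))"
    using n2 by (intro ccw_convex_positionD[OF U_convex]) auto
  then show ?thesis by (simp add: e_def det2_def algebra_simps)
qed

lemma V_eq: "V j = (1 / d j) *\<^sub>R e j"
  by (simp add: Vh_def d_def e_def)

lemma V_add_n: "V (j + int n) = - V j"
  by (simp add: V_eq e_add_n d_add_n)

lemma det2_U_V: "det2 (U j) (V j) = 1" "det2 (U (j + 1)) (V j) = 1"
proof -
  have "det2 (U j) (e j) = d j" "det2 (U (j + 1)) (e j) = d j"
    by (simp_all add: e_def d_def det2_def algebra_simps)
  then show "det2 (U j) (V j) = 1" "det2 (U (j + 1)) (V j) = 1"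
    using d_pos[of j] by (simp_all add: V_eq det2_simps)
qed

lemma det2_U_V_less_1:
  assumes "j mod (2 * int n) \<noteq> m mod (2 * int n)" "j mod (2 * int n) \<noteq> (m + 1) mod (2 * int n)"
  shows "det2 (U j) (V m) < 1"
proof -
  have "0 < det2 (U (m + 1) - U m) (U j - U m)"
    using U_convex assms unfolding ccw_convex_position_def by blast
  moreover have "det2 (U (m + 1) - U m) (U j - U m) = d m - det2 (U j) (e m)"
    by (simp add: e_def d_def det2_def algebra_simps)
  ultimately show ?thesis using d_pos[of m] by (simp add: V_eq det2_simps field_simps)
qed

text \<open>\<open>V\<close> is the polar polygon of \<open>U\<close>: its edges lie on the lines \<open>det2 (U j) x = 1\<close>, and
  \<open>det2_U_V_less_1\<close> says that it lies strictly on one side of each of them.\<close>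

lemma V_convex: "ccw_convex_position n V"
  unfolding ccw_convex_position_def
proof (intro allI impI)
  fix i j assume ij: "j mod (2 * int n) \<noteq> i mod (2 * int n) \<and> j mod (2 * int n) \<noteq> (i + 1) mod (2 * int n)"
  have "U (i + 1) \<noteq> 0" using d_pos[of "i + 1"] by (auto simp: d_def det2_def)
  moreover have "det2 (U (i + 1)) (V (i + 1) - V i) = 0"
    using det2_U_V[of "i + 1"] det2_U_V[of i] by (simp add: det2_simps)
  ultimately obtain r where r: "V (i + 1) - V i = r *\<^sub>R U (i + 1)"
    by (metis det2_eq_0_imp_parallel)
  have "det2 (V i) (V (i + 1)) = det2 (e i) (e (i + 1)) / (d i * d (i + 1))"
    by (simp add: V_eq det2_simps)
  then have "0 < det2 (V i) (V (i + 1))"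
    using det2_consecutive_edges_pos[of "i + 1"] d_pos[of i] d_pos[of "i + 1"] by simp
  moreover have "det2 (V i) (V (i + 1)) = - r * det2 (U (i + 1)) (V i)"
    using arg_cong[OF r, of "det2 (V i)"] by (simp add: det2_simps det2_commute[of "V i"])
  ultimately have "r < 0" using det2_U_V(2)[of i] by simp
  have "(i + 1) mod (2 * int n) \<noteq> (j + 1) mod (2 * int n)"
    using ij by (auto simp: mod_eq_dvd_iff dvd_diff_commute)
  then have "det2 (U (i + 1)) (V j) < 1" using ij by (intro det2_U_V_less_1) auto
  have "det2 (V (i + 1) - V i) (V j - V i) = r * (det2 (U (i + 1)) (V j) - 1)"
    using det2_U_V(2)[of i] by (simp add: r det2_simps right_diff_distrib)
  also have "\<dots> > 0" using \<open>r < 0\<close> \<open>det2 (U (i + 1)) (V j) < 1\<close> by (simp add: mult_neg_neg)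
  finally show "det2 (V (i + 1) - V i) (V j - V i) > 0" .
qed

lemma det2_edges_pos:
  assumes "1 \<le> l" "l \<le> n - 1"
  shows "0 < det2 (e k) (e (k + int l))"
proof -
  have "0 < det2 (V k) (V (k + int l))"
    using det2_vertices_pos[OF n2 V_add_n V_convex] assms by blast
  moreover have "det2 (V k) (V (k + int l)) = det2 (e k) (e (k + int l)) / (d k * d (k + int l))"
    by (simp add: V_eq det2_simps)
  ultimately show ?thesis using mult_pos_pos[OF d_pos[of k] d_pos[of "k + int l"]]
    by (simp add: zero_less_divide_iff)
qed

lemma edges_positive_run:
  assumes "v \<noteq> 0"
  obtains k where "positive_run n (\<lambda>j. det2 (e j) v) k"
proof -
  define s where "s j = det2 (e j) v" for j
  have anti: "antiperiodic n s" by (simp add: antiperiodic_def s_def e_add_n det2_simps)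
  obtain m where "s m \<noteq> 0"
    using det2_eq_0_both_imp_zero[of "e 0" v "e 1"] det2_consecutive_edges_pos[of 1] assms
    by (force simp: s_def)
  then have "0 < s m \<or> 0 < s (m + int n)" using antiperiodicD[OF anti, of m] by linarith
  then obtain m' where "0 < s m'" by blast
  then have "s (m' + int n) \<le> 0" "0 < s (m' + int n + int n)"
    using antiperiodicD[OF anti, of m'] antiperiodicD[OF anti, of "m' + int n"] by simp_all
  then obtain k where k: "s k \<le> 0" "0 < s (k + 1)" by (rule int_sign_change)
  have pos: "0 < s (k + int m)" if m: "1 \<le> m" "m \<le> n - 1" for m
  proof -
    have A: "0 < det2 (e k) (e (k + int m))" using m by (rule det2_edges_pos)
    have B: "0 \<le> det2 (e (k + 1)) (e (k + int m))"
    proof (cases "m = 1")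
      case False
      then have "0 < det2 (e (k + 1)) (e (k + 1 + int (m - 1)))" using m by (intro det2_edges_pos) auto
      with False m show ?thesis by (simp add: add.assoc)
    qed (simp add: det2_simps)
    have "det2 (e k) (e (k + 1)) * s (k + int m)
        = s (k + 1) * det2 (e k) (e (k + int m)) + (- s k) * det2 (e (k + 1)) (e (k + int m))"
      using det2_cramer[of "e k" "e (k + 1)" "e (k + int m)" v] by (simp add: s_def det2_def algebra_simps)
    also have "\<dots> > 0" using k A B by (intro add_pos_nonneg mult_pos_pos mult_nonneg_nonneg) auto
    finally show ?thesis using det2_consecutive_edges_pos[of "k + 1"] by (simp add: zero_less_mult_iff)
  qed
  have "positive_run n s k"
    unfolding positive_run_def
  proof
    fix l assume "l \<in> {1..int n - 1}"
    then have "l = int (nat l)" "1 \<le> nat l" "nat l \<le> n - 1" by auto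
    then show "0 < s (k + l)" using pos[of "nat l"] by simp
  qed
  moreover have "s = (\<lambda>j. det2 (e j) v)" by (simp add: s_def fun_eq_iff)
  ultimately show ?thesis using that by simp
qed

lemma M_add_n: "M (j + int n) = M j"
  using P_periodic[of j] by (simp add: Mv_def add.assoc)

lemma M_periodic: "M (j + 2 * int n) = M j"
  using M_add_n[of j] M_add_n[of "j + int n"] by (simp add: add.assoc)

lemma M_diff: "M (j + 1) - M j = alpha j *\<^sub>R e j"
  using M_edge by (simp add: e_def)

lemma alpha_add_n: "alpha (j + int n) = - alpha j"
proof -
  have "alpha (j + int n) *\<^sub>R e (j + int n) = alpha j *\<^sub>R e j"
    using M_diff[of "j + int n"] M_diff[of j] M_add_n[of j] M_add_n[of "j + 1"]
    by (simp add: add_ac)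
  then have "(alpha (j + int n) + alpha j) *\<^sub>R e j = 0"
    by (simp add: e_add_n scaleR_left_distrib neg_eq_iff_add_eq_0)
  then show ?thesis using e_neq_0[of j] by simp
qed

lemma closed_segment_subset_Mcurve: "closed_segment (M j) (M (j + 1)) \<subseteq> Mcurve n P"
proof -
  have "(M (k + 2 * int n), M (k + 2 * int n + 1)) = (M k, M (k + 1))" for k
    using M_periodic[of k] M_periodic[of "k + 1"] by (simp add: add_ac)
  then have "(M j, M (j + 1)) \<in> (\<lambda>j. (M j, M (j + 1))) ` {1..2 * int n}"
    using n2 by (intro periodic_in_image) auto
  then show ?thesis unfolding Mcurve_def by auto
qed

lemma convex_Ppoly: "convex (Ppoly n P)"
  unfolding Ppoly_def by (rule convex_convex_hull)

lemma P_in_Ppoly: "P j \<in> Ppoly n P"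
proof -
  have "P j \<in> P ` {1..2 * int n}"
    using n2 by (intro periodic_in_image) (simp_all add: P_periodic)
  then show ?thesis unfolding Ppoly_def by (rule hull_inc)
qed

lemma Mcurve_subset_Ppoly: "Mcurve n P \<subseteq> Ppoly n P"
proof -
  have "M j \<in> Ppoly n P" for j
    unfolding Mv_def using convexD[OF convex_Ppoly P_in_Ppoly P_in_Ppoly, of "1/2" "1/2"]
    by (simp add: scaleR_add_right)
  then show ?thesis
    unfolding Mcurve_def using convex_Ppoly by (intro UN_least closed_segment_subset) auto
qed

definition side :: "int \<Rightarrow> real^2 \<Rightarrow> real" where
  "side j X = det2 (e j) (X - M j)"

lemma antiperiodic_side: "antiperiodic n (\<lambda>j. side j X)"
  by (simp add: antiperiodic_def side_def e_add_n M_add_n det2_simps)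

lemma side_periodic: "side (j + 2 * int n) X = side j X"
  using antiperiodic_periodic[OF antiperiodic_side] .

lemma side_add_scaleR: "side j (X + t *\<^sub>R v) = side j X + t * det2 (e j) v"
  by (simp add: side_def det2_def algebra_simps)

lemma continuous_on_side: "continuous_on S (side j)"
  unfolding side_def[abs_def] by (rule continuous_on_det2_right)

lemma side_crosses_at_zeros:
  assumes X: "X \<notin> Mcurve n P"
  shows "crosses_at_zeros (\<lambda>j. side j X)"
  unfolding crosses_at_zeros_def
proof (intro allI impI)
  fix j assume "side j X = 0"
  then obtain u where u: "X - M j = u *\<^sub>R e j"
    unfolding side_def using e_neq_0 by (blast elim: det2_eq_0_imp_parallel)
  have side_prev: "side (j - 1) X = u * det2 (e (j - 1)) (e j)"
    using M_diff[of "j - 1"] u by (simp add: side_def det2_def algebra_simps)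
  have side_next: "side (j + 1) X = (alpha j - u) * det2 (e j) (e (j + 1))"
    using M_diff[of j] u by (simp add: side_def det2_def algebra_simps)
  have "0 < u * (u - alpha j)"
  proof (rule ccontr)
    assume "\<not> 0 < u * (u - alpha j)"
    then have "M j + u *\<^sub>R e j \<in> closed_segment (M j) (M j + alpha j *\<^sub>R e j)"
      by (intro add_scaleR_in_closed_segment) simp
    moreover have "M j + u *\<^sub>R e j = X" "M j + alpha j *\<^sub>R e j = M (j + 1)"
      using u M_diff[of j] by (simp_all add: algebra_simps)
    ultimately have "X \<in> closed_segment (M j) (M (j + 1))" by simp
    then show False using X closed_segment_subset_Mcurve by blast
  qed
  then show "side (j - 1) X * side (j + 1) X < 0"
    unfolding side_prev side_next using det2_consecutive_edges_pos[of j] det2_consecutive_edges_pos[of "j + 1"]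
    by (simp add: mult_less_0_iff zero_less_mult_iff) 
qed

definition good :: "real^2 \<Rightarrow> bool" where
  "good X \<longleftrightarrow> (\<exists>k. positive_run n (\<lambda>j. side j X) k)"

definition weakly_good :: "real^2 \<Rightarrow> bool" where
  "weakly_good X \<longleftrightarrow> (\<exists>k\<in>{1..2 * int n}. \<forall>l\<in>{1..int n - 1}. 0 \<le> side (k + l) X)"

lemma open_good: "open {X. good X}"
proof -
  have "{X. good X} = (\<Union>k. \<Inter>l\<in>{1..int n - 1}. {X. 0 < side (k + l) X})"
    by (auto simp: good_def positive_run_def)
  moreover have "open (\<Inter>l\<in>{1..int n - 1}. {X. 0 < side (k + l) X})" for k
    by (intro open_INT finite_atLeastAtMost_int ballI open_Collect_less continuous_on_side
        continuous_on_const)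
  ultimately show ?thesis by (simp add: open_UN)
qed

lemma closed_weakly_good: "closed {X. weakly_good X}"
proof -
  have "{X. weakly_good X} = (\<Union>k\<in>{1..2 * int n}. \<Inter>l\<in>{1..int n - 1}. {X. 0 \<le> side (k + l) X})"
    by (auto simp: weakly_good_def)
  moreover have "closed (\<Inter>l\<in>{1..int n - 1}. {X. 0 \<le> side (k + l) X})" for k
    by (intro closed_INT ballI closed_Collect_le continuous_on_side continuous_on_const)
  ultimately show ?thesis by (simp add: closed_UN)
qed

lemma good_imp_weakly_good:
  assumes "good X"
  shows "weakly_good X"
proof -
  obtain k where k: "positive_run n (\<lambda>j. side j X) k" using assms by (auto simp: good_def)
  have "side (j + 2 * int n + l) X = side (j + l) X" for j l
    using side_periodic[of "j + l" X] by (simp add: add_ac)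
  then have "(\<lambda>l. side (k + l) X) \<in> (\<lambda>k l. side (k + l) X) ` {1..2 * int n}"
    using n2 by (intro periodic_in_image) (simp_all add: fun_eq_iff)
  then obtain k' where "k' \<in> {1..2 * int n}" "\<And>l. side (k + l) X = side (k' + l) X"
    by (auto simp: fun_eq_iff)
  with k show ?thesis by (auto simp: weakly_good_def positive_run_def intro!: less_imp_le)
qed

lemma weakly_good_imp_good:
  assumes "weakly_good X" "X \<notin> Mcurve n P"
  shows "good X"
proof -
  obtain k where "\<forall>l\<in>{1..int n - 1}. 0 \<le> side (k + l) X" using assms(1) by (auto simp: weakly_good_def)
  with n2 antiperiodic_side side_crosses_at_zeros[OF assms(2)] show ?thesis
    unfolding good_def by (blast elim: nonneg_run_imp_positive_run)
qed

lemma good_connected: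
  assumes "connected S" "S \<inter> Mcurve n P = {}" "a \<in> S" "b \<in> S" "good a"
  shows "good b"
proof -
  define T where "T = S \<inter> {X. good X}"
  have "openin (top_of_set S) T" unfolding T_def using open_good by (rule openin_open_Int)
  moreover have "T = S \<inter> {X. weakly_good X}"
    using assms(2) good_imp_weakly_good weakly_good_imp_good by (auto simp: T_def)
  then have "closedin (top_of_set S) T" using closed_weakly_good by (simp add: closedin_closed_Int)
  ultimately have "T = {} \<or> T = S" using assms(1) by (simp add: connected_clopen)
  with assms(3-5) show ?thesis by (auto simp: T_def)
qed

lemma good_frontier:
  assumes x: "x \<in> frontier (Ppoly n P)" "x \<notin> Mcurve n P"
  shows "good x"
proof -
  have "x \<in> closure (Ppoly n P)" "x \<notin> rel_interior (Ppoly n P)"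
    using x(1) rel_interior_nonempty_interior[OF P_interior] by (simp_all add: frontier_def)
  then obtain a where "a \<noteq> 0" and a: "\<And>y. y \<in> closure (Ppoly n P) \<Longrightarrow> a \<bullet> x \<le> a \<bullet> y"
    by (rule supporting_hyperplane_relative_frontier[OF convex_Ppoly]) blast
  define v where "v = - a"
  have ray: "x + t *\<^sub>R v \<notin> Mcurve n P" if "0 \<le> t" for t
  proof (cases "t = 0")
    case False
    with that \<open>a \<noteq> 0\<close> have "a \<bullet> (x + t *\<^sub>R v) < a \<bullet> x"
      by (simp add: v_def inner_diff_right zero_less_mult_iff)
    then have "x + t *\<^sub>R v \<notin> closure (Ppoly n P)" using a[of "x + t *\<^sub>R v"] by linarith
    then show ?thesis using Mcurve_subset_Ppoly closure_subset by blast
  qed (use x in simp)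
  obtain k where k: "positive_run n (\<lambda>j. det2 (e j) v) k"
    using \<open>a \<noteq> 0\<close> edges_positive_run[of v] by (auto simp: v_def)
  then obtain T where "0 \<le> T" and T: "\<And>l. l \<in> {1..int n - 1} \<Longrightarrow> 0 < side (k + l) x + T * det2 (e (k + l)) v"
    using ex_scale_all_pos[of "{1..int n - 1}" "\<lambda>l. det2 (e (k + l)) v" "\<lambda>l. side (k + l) x"]
    by (auto simp: positive_run_def)
  have far: "good (x + T *\<^sub>R v)"
    unfolding good_def positive_run_def side_add_scaleR using T by blast
  have "y \<notin> Mcurve n P" if "y \<in> closed_segment x (x + T *\<^sub>R v)" for y
    using closed_segment_on_ray[OF that \<open>0 \<le> T\<close>] ray by metis
  then have "closed_segment x (x + T *\<^sub>R v) \<inter> Mcurve n P = {}" by blast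
  from good_connected[OF connected_segment this ends_in_segment(2) ends_in_segment(1) far]
  show ?thesis .
qed

lemma beta_eq: "beta j = (\<Sum>l<n. alpha (j + int l) * d (j + int l)) / 2"
  by (simp add: betaf_def d_def sum_int_interval_eq_sum_lessThan)

lemma beta_diff: "beta i = beta (i - 1) - alpha (i - 1) * d (i - 1)"
proof -
  define g where "g j = alpha j * d j" for j
  obtain n' where n': "n = Suc n'" using n2 by (cases n) auto
  have "g (i + int n') = g (i - 1 + int n)" by (simp add: n')
  also have "\<dots> = - g (i - 1)" by (simp add: g_def alpha_add_n d_add_n)
  finally have "(\<Sum>l<n. g (i + int l)) = (\<Sum>l<n'. g (i + int l)) - g (i - 1)"
    by (simp add: n')
  moreover have "(\<Sum>l<n. g (i - 1 + int l)) = g (i - 1) + (\<Sum>l<n'. g (i + int l))"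
    unfolding n' sum.lessThan_Suc_shift by (simp add: algebra_simps)
  ultimately show ?thesis by (simp add: beta_eq g_def)
qed

lemma Nh_eq: "Nh n U P alpha i = M i + beta i *\<^sub>R V i"
  by (simp add: Nh_def)

lemma Nh_prev_eq: "Nh n U P alpha (i - 1) = M i + beta i *\<^sub>R V (i - 1)"
proof -
  have "M i = M (i - 1) + (alpha (i - 1) * d (i - 1)) *\<^sub>R V (i - 1)"
    using M_diff[of "i - 1"] d_pos[of "i - 1"] by (simp add: V_eq algebra_simps)
  then show ?thesis by (simp add: Nh_def beta_diff[of i] algebra_simps)
qed

lemma sides_at_N_segment:
  assumes C: "C = M i + b *\<^sub>R ((1 - t) *\<^sub>R V (i - 1) + t *\<^sub>R V i)"
  shows "side (i - 1) C = b * t * (det2 (e (i - 1)) (e i) / d i)"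
    and "side i C = - (b * (1 - t) * (det2 (e (i - 1)) (e i) / d (i - 1)))"
proof -
  have "side (i - 1) C = det2 (e (i - 1)) (alpha (i - 1) *\<^sub>R e (i - 1) + (C - M i))"
    using M_diff[of "i - 1"] by (simp add: side_def algebra_simps)
  then show "side (i - 1) C = b * t * (det2 (e (i - 1)) (e i) / d i)"
    by (simp add: C V_eq det2_simps)
  show "side i C = - (b * (1 - t) * (det2 (e (i - 1)) (e i) / d (i - 1)))"
    by (simp add: C side_def V_eq det2_simps det2_commute[of "e i"])
qed

text \<open>Summation by parts turns the sum defining \<open>beta i\<close> into the sum of the sides.\<close>

lemma sum_sides_at_N_segment:
  assumes C: "C = M i + beta i *\<^sub>R ((1 - t) *\<^sub>R V (i - 1) + t *\<^sub>R V i)"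
  shows "(\<Sum>l<n - 1. side (i + int l) C) = beta i * t * (1 - det2 (U (i - 1)) (V i))"
proof -
  define W where "W = (1 - t) *\<^sub>R V (i - 1) + t *\<^sub>R V i"
  have n: "Suc (n - 1) = n" "i + int (n - 1) = i - 1 + int n" using n2 by auto
  have "(\<Sum>l<n. det2 (U (i + int l)) (M (i + int l + 1) - M (i + int l))) = 2 * beta i"
    by (simp add: beta_eq M_diff d_def e_def det2_simps)
  moreover have "M (i - 1 + int n + 1) = M i" using M_add_n[of i] by (simp add: algebra_simps)
  then have "det2 (U (i + int (n - 1))) (M (i + int (n - 1) + 1) - C) = beta i * det2 (U (i - 1)) W"
    unfolding n(2) U_add_n by (simp add: C W_def det2_simps algebra_simps)
  moreover have "det2 (U i) (M i - C) = - beta i"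
    using det2_U_V(1)[of i] det2_U_V(2)[of "i - 1"] by (simp add: C det2_simps algebra_simps)
  moreover have "det2 (U (j + 1) - U j) (M (j + 1) - C) = - side j C" for j
  proof -
    have "M (j + 1) - C = alpha j *\<^sub>R e j - (C - M j)" using M_diff[of j] by (simp add: algebra_simps)
    then show ?thesis unfolding e_def[symmetric] by (simp add: side_def det2_simps)
  qed
  ultimately have "2 * beta i = beta i * det2 (U (i - 1)) W + beta i + (\<Sum>l<n - 1. side (i + int l) C)"
    using det2_summation_by_parts[of U i M "n - 1" C] unfolding n(1) by (simp add: sum_negf)
  then have "(\<Sum>l<n - 1. side (i + int l) C) = beta i - beta i * det2 (U (i - 1)) W" by linarith
  also have "\<dots> = beta i * t * (1 - det2 (U (i - 1)) (V i))"
    using det2_U_V(1)[of "i - 1"] by (simp add: W_def det2_simps algebra_simps)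
  finally show ?thesis .
qed

lemma not_good_on_N_segment:
  assumes "C \<in> closed_segment (Nh n U P alpha (i - 1)) (Nh n U P alpha i)"
  shows "\<not> good C"
proof
  assume "good C"
  then obtain k where run: "positive_run n (\<lambda>j. side j C) k" by (auto simp: good_def)
  obtain t where t: "0 \<le> t" "t \<le> 1"
    and "C = (1 - t) *\<^sub>R Nh n U P alpha (i - 1) + t *\<^sub>R Nh n U P alpha i"
    using assms unfolding in_segment(1) by blast
  then have C: "C = M i + beta i *\<^sub>R ((1 - t) *\<^sub>R V (i - 1) + t *\<^sub>R V i)"
    by (simp add: Nh_eq[of i] Nh_prev_eq[of i] algebra_simps)
  define A B K where "A = det2 (e (i - 1)) (e i) / d i" and "B = det2 (e (i - 1)) (e i) / d (i - 1)"
    and "K = 1 - det2 (U (i - 1)) (V i)"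
  have "0 < A" "0 < B" using det2_consecutive_edges_pos[of i] d_pos by (simp_all add: A_def B_def)
  have "0 < K" using n2 by (simp add: K_def det2_U_V_less_1 mod_neq_if_abs_diff_less)
  have no_descent: False
    if "antiperiodic n q" "positive_run n q k'" and q: "q (i - 1) = x * A" "q i = - (y * B)"
      "(\<Sum>l<n - 1. q (i + int l)) = x * K" and "0 \<le> x" "0 \<le> y" for q k' x y
  proof (rule positive_run_no_descent[OF n2 that(1,2), where i = i])
    show "0 \<le> q (i - 1)" "q i \<le> 0" "0 \<le> (\<Sum>l<n - 1. q (i + int l))"
      unfolding q using that(6,7) \<open>0 < A\<close> \<open>0 < B\<close> \<open>0 < K\<close> by simp_all
    show "0 < (\<Sum>l<n - 1. q (i + int l))" if "0 < q (i - 1)"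
      using that \<open>0 < A\<close> \<open>0 < K\<close> unfolding q by (simp add: zero_less_mult_iff)
  qed
  note sides = sides_at_N_segment[OF C, folded A_def B_def] sum_sides_at_N_segment[OF C, folded K_def]
  show False
  proof (cases "0 \<le> beta i")
    case True
    with t show False by (intro no_descent[OF antiperiodic_side run sides]) simp_all
  next
    case False
    have "(\<Sum>l<n - 1. - side (i + int l) C) = (- beta i * t) * K" unfolding sum_negf sides(3) by simp
    with False t sides(1,2) show False
      by (intro no_descent[OF antiperiodic_uminus[OF antiperiodic_side]
            positive_run_uminus[OF antiperiodic_side run], of "- beta i * t" "- beta i * (1 - t)"])
        (simp_all add: mult_nonpos_nonneg)
  qed
qed

end

theorem lemma4p5:
  fixes n :: nat and U P :: "int \<Rightarrow> real^2" and c :: real and alpha :: "int \<Rightarrow> real"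
    and i :: int and C :: "real^2"
  assumes n2: "n \<ge> 2"
    and U: "sym_convex_polygon n U"
    and c: "c > 0"
    and Pper: "\<forall>k. P (k + 2 * int n) = P k"
    and Pedge: "\<forall>k. \<exists>t\<ge>0. P (k + 1) - P k = t *\<^sub>R Vh U k"
    and Psym: "\<forall>k. P k - P (k + int n) = (2 * c) *\<^sub>R U k"
    and Pint: "interior (Ppoly n P) \<noteq> {}"
    and alpha: "\<forall>k. Mv n P (k + 1) - Mv n P k = alpha k *\<^sub>R (U (k + 1) - U k)"
    and i: "1 \<le> i" "i \<le> 2 * int n"
    and C: "C \<in> closed_segment (Nh n U P alpha (i - 1)) (Nh n U P alpha i)"
  shows "C \<in> Mbar n P"
proof -
  interpret central_equidistant n U P alpha
    using n2 U Pper Pint alpha by unfold_locales auto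
  show ?thesis unfolding Mbar_def
  proof
    assume "C \<in> exteriorM n P"
    then obtain g where g: "path g" "pathstart g = C" "pathfinish g \<in> frontier (Ppoly n P)"
      "path_image g \<inter> Mcurve n P = {}"
      unfolding exteriorM_def by blast
    then have "good (pathfinish g)" using pathfinish_in_path_image by (blast intro: good_frontier)
    then have "good C"
      using good_connected[OF connected_path_image[OF g(1)] g(4)] g(2)
        pathfinish_in_path_image pathstart_in_path_image by blast
    then show False using not_good_on_N_segment[OF C] by contradiction
  qed
qed

end
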